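(* Let $k\ge0$, let $s$ be the singular factor of length $q_k$ of slope $\alpha$, let $w\in\mathcal{L}_\alpha$ be a complete first return to $s$ in the same phase, and write $s^{-1}ws^{-1}=u_0u_1\cdots u_{n-1}$ with $|u_0|=\cdots=|u_{n-1}|=q_k$. Put $\lambda=q_{k+1}-p_{k+1}-1$ if $k$ is odd and $\lambda=p_{k+1}-1$ if $k$ is even. Then the words $u_0,u_1,\ldots,u_{\lambda-1}$ end with the same letter as $s$, and the words $u_{n-\lambda},u_{n-\lambda+1},\ldots,u_{n-1}$ begin with the same letter as $s$. Moreover, $s$ begins and ends with the same letter.
   Context: $\alpha\in(0,1)$ irrational, $\alpha=[0;a_1,a_2,\ldots]$ with positive integers $a_i$, $a_1\ge2$; $p_{-1}=1,q_{-1}=0,p_0=0,q_0=1,p_1=1,q_1=a_1$, $p_k=a_kp_{k-1}+p_{k-2}$, $q_k=a_kq_{k-1}+q_{k-2}$ ($k\ge2$). Identify the circle $\mathbb{T}$ with $[0,1)$, $R(\rho)=\{\rho+\alpha\}$; fix one convention, $I_0=[0,1-\alpha)$, $I_1=[1-\alpha,1)$ or $I_0=(0,1-\alpha]$, $I_1=(1-\alpha,1]$. $\mathbf{s}_{\rho,\alpha}$ has $n$-th letter $0$ if $R^n(\rho)\in I_0$ and $1$ otherwise; all such words share the set $\mathcal{L}_\alpha$ of finite factors. For $v=b_0\cdots b_{n-1}\in\mathcal{L}_\alpha$, $[v]=\bigcap_{i}R^{-i}(I_{b_i})$ ($\mathbf{s}_{\rho,\alpha}$ begins with $v$ iff $\rho\in[v]$).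 The singular factor of length $q_k$ is the unique $s\in\mathcal{L}_\alpha$ of length $q_k$ with $[s]$ having endpoints $0$ and $\{-q_k\alpha\}$. A word $u$ is a complete first return to $v$ in the same phase if $u$ has $v$ as a prefix and a suffix, $|u|\equiv0\pmod{|v|}$, $u$ contains at least two occurrences of $v$, and every occurrence of $v$ in $u$ at a position $i\equiv0\pmod{|v|}$ (positions from $0$) has $i=0$ or $i=|u|-|v|$. $s^{-1}ws^{-1}$ denotes $w$ with its prefix $s$ and suffix $s$ removed. *)

theory Defs
  imports Complex_Main "HOL-Library.Sublist"
begin

text \<open>Partial quotients a 1, a 2, ... (a 0 is ignored). cf_p a k = p_k, cf_q a k = q_k for k \<ge> 0.\<close>
fun cf_p :: "(nat \<Rightarrow> nat) \<Rightarrow> nat \<Rightarrow> nat" where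
  "cf_p a 0 = 0"
| "cf_p a (Suc 0) = 1"
| "cf_p a (Suc (Suc k)) = a (Suc (Suc k)) * cf_p a (Suc k) + cf_p a k"

fun cf_q :: "(nat \<Rightarrow> nat) \<Rightarrow> nat \<Rightarrow> nat" where
  "cf_q a 0 = 1"
| "cf_q a (Suc 0) = a 1"
| "cf_q a (Suc (Suc k)) = a (Suc (Suc k)) * cf_q a (Suc k) + cf_q a k"

definition cf_expansion :: "real \<Rightarrow> (nat \<Rightarrow> nat) \<Rightarrow> bool" where
  "cf_expansion \<alpha> a \<longleftrightarrow> 0 < \<alpha> \<and> \<alpha> < 1 \<and> \<alpha> \<notin> \<rat> \<and>
     (\<forall>i\<ge>1. a i > 0) \<and> a 1 \<ge> 2 \<and>
     (\<lambda>k. real (cf_p a k) / real (cf_q a k)) \<longlonglongrightarrow> \<alpha>"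

text \<open>Points of the circle are represented by reals modulo 1.
  Convention conv = True: I_0 = [0,1-alpha), I_1 = [1-alpha,1).
  Convention conv = False: I_0 = (0,1-alpha], I_1 = (1-alpha,1] (the point 1 being 0 mod 1).\<close>
definition letter :: "bool \<Rightarrow> real \<Rightarrow> real \<Rightarrow> nat" where
  "letter conv \<alpha> x =
     (if conv then (if frac x < 1 - \<alpha> then 0 else 1)
      else (if 0 < frac x \<and> frac x \<le> 1 - \<alpha> then 0 else 1))"

definition rot_word :: "bool \<Rightarrow> real \<Rightarrow> real \<Rightarrow> nat \<Rightarrow> nat" where
  "rot_word conv \<alpha> \<rho> n = letter conv \<alpha> (\<rho> + real n * \<alpha>)"

definition lang :: "bool \<Rightarrow> real \<Rightarrow> nat list set" where
  "lang conv \<alpha> = {v. \<exists>\<rho> m. v = map (\<lambda>i. rot_word conv \<alpha> \<rho> (m + i)) [0..<length v]}"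

definition cyl :: "bool \<Rightarrow> real \<Rightarrow> nat list \<Rightarrow> real set" where
  "cyl conv \<alpha> v = {\<rho>. 0 \<le> \<rho> \<and> \<rho> < 1 \<and> (\<forall>i<length v. rot_word conv \<alpha> \<rho> i = v ! i)}"

text \<open>C (subset of [0,1)) is an arc of the circle with endpoints x and y (x, y in [0,1)):
  it contains one of the two open arcs between x and y and is contained in its closure.\<close>
definition arc_endpoints :: "real set \<Rightarrow> real \<Rightarrow> real \<Rightarrow> bool" where
  "arc_endpoints C x y \<longleftrightarrow>
     (let l = min x y; r = max x y in
       ({l<..<r} \<subseteq> C \<and> C \<subseteq> {l..r}) \<or>
       ({0..<1} - {l..r} \<subseteq> C \<and> C \<subseteq> {0..<1} - {l<..<r}))"

definition singular_factor :: "bool \<Rightarrow> real \<Rightarrow> (nat \<Rightarrow> nat) \<Rightarrow> nat \<Rightarrow> nat list \<Rightarrow> bool" where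
  "singular_factor conv \<alpha> a k s \<longleftrightarrow>
     s \<in> lang conv \<alpha> \<and> length s = cf_q a k \<and>
     arc_endpoints (cyl conv \<alpha> s) 0 (frac (- real (cf_q a k) * \<alpha>))"

definition occurs_at :: "'a list \<Rightarrow> 'a list \<Rightarrow> nat \<Rightarrow> bool" where
  "occurs_at v u i \<longleftrightarrow> i + length v \<le> length u \<and> take (length v) (drop i u) = v"

definition complete_first_return :: "'a list \<Rightarrow> 'a list \<Rightarrow> bool" where
  "complete_first_return v u \<longleftrightarrow>
     prefix v u \<and> suffix v u \<and> length v dvd length u \<and>
     card {i. occurs_at v u i} \<ge> 2 \<and>
     (\<forall>i. occurs_at v u i \<and> length v dvd i \<longrightarrow> i = 0 \<or> i = length u - length v)"

end

(* Let \<theta> = q_k \<alpha> - p_k (cf_err); its sign is (-1)^k, and the determinant identity for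
   convergents gives, for k \<ge> 1, (\<lambda> + 1) |\<theta>| < \<alpha> if k is even and < 1 - \<alpha> if k is odd.
   So the cylinder [s] cannot be the long arc between 0 and {-q_k \<alpha>}, which meets both I_0 and
   I_1: it is the short arc between 0 and -\<theta>, and every point where the orbit reads s is
   -t \<theta> mod 1 with 0 \<le> t \<le> 1. As q_k \<alpha> = \<theta> mod 1, the last letter of u_j is read at
   (j + 2 - t) \<theta> - \<alpha> and, going back from the final occurrence of s, the first letter of u_j
   at -(n - j + t') \<theta>. For 0 < r \<le> \<lambda> + 1 the points r \<theta> - \<alpha> and -r \<theta> lie in the interior
   of I_1 (k even) or of I_0 (k odd), as do the points -\<theta>/2 and \<theta>/2 - \<alpha> at which the first
   and last letters of s are read. *)

theory Submission
  imports Defs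
begin

lemma cf_q_pos: "0 < a 1 \<Longrightarrow> 0 < cf_q a k"
  by (induction a k rule: cf_q.induct) auto

lemma cf_p_pos: "\<forall>i\<ge>1. 0 < a i \<Longrightarrow> 1 \<le> k \<Longrightarrow> 0 < cf_p a k"
  by (induction a k rule: cf_p.induct) auto

lemma cf_p_less_cf_q: "2 \<le> a 1 \<Longrightarrow> cf_p a k < cf_q a k"
proof (induction a k rule: cf_q.induct)
  case (3 a k)
  then have "a (Suc (Suc k)) * cf_p a (Suc k) \<le> a (Suc (Suc k)) * cf_q a (Suc k)"
    by simp
  with 3 show ?case
    by (simp add: add_le_less_mono)
qed auto

lemma cf_det:
  "real (cf_p a (Suc k)) * cf_q a k - real (cf_p a k) * cf_q a (Suc k) = (-1) ^ k"
proof (induction k)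
  case (Suc k)
  have "real (cf_p a (Suc (Suc k))) * cf_q a (Suc k) - real (cf_p a (Suc k)) * cf_q a (Suc (Suc k))
      = - (real (cf_p a (Suc k)) * cf_q a k - real (cf_p a k) * cf_q a (Suc k))"
    by (simp add: algebra_simps)
  with Suc show ?case
    by simp
qed simp

lemma cf_ratio_step:
  assumes "0 < a 1"
  shows "real (cf_p a (Suc (Suc k))) / cf_q a (Suc (Suc k)) - real (cf_p a k) / cf_q a k
       = (-1) ^ k * a (Suc (Suc k)) / (real (cf_q a k) * cf_q a (Suc (Suc k)))"
proof -
  have "real (cf_p a (Suc (Suc k))) * cf_q a k - real (cf_p a k) * cf_q a (Suc (Suc k))
      = a (Suc (Suc k)) * (real (cf_p a (Suc k)) * cf_q a k - real (cf_p a k) * cf_q a (Suc k))"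
    by (simp add: algebra_simps)
  with cf_det[of a k] have "real (cf_p a (Suc (Suc k))) * cf_q a k - real (cf_p a k) * cf_q a (Suc (Suc k))
      = (-1) ^ k * a (Suc (Suc k))"
    by simp
  moreover have "real (cf_q a k) \<noteq> 0" "real (cf_q a (Suc (Suc k))) \<noteq> 0"
    using cf_q_pos[of a, OF assms] by (simp_all del: cf_q.simps)
  ultimately show ?thesis
    by (simp add: diff_frac_eq mult.commute del: cf_p.simps cf_q.simps)
qed

definition cf_err :: "real \<Rightarrow> (nat \<Rightarrow> nat) \<Rightarrow> nat \<Rightarrow> real" where
  "cf_err \<alpha> a k = real (cf_q a k) * \<alpha> - real (cf_p a k)"

lemma cf_err_alternates:
  assumes "cf_expansion \<alpha> a"
  shows "0 < (-1) ^ k * cf_err \<alpha> a k"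
proof -
  have pos: "\<forall>i\<ge>1. 0 < a i" and lim: "(\<lambda>k. real (cf_p a k) / cf_q a k) \<longlonglongrightarrow> \<alpha>"
    using assms by (simp_all add: cf_expansion_def)
  then have a1: "0 < a 1"
    by simp
  define y where "y i = (-1) ^ k * (real (cf_p a (k + 2 * i)) / cf_q a (k + 2 * i))" for i
  have step: "y i < y (Suc i)" for i
  proof -
    have "0 < real (a (Suc (Suc (k + 2 * i)))) / (real (cf_q a (k + 2 * i)) * cf_q a (Suc (Suc (k + 2 * i))))"
      using pos cf_q_pos[of a, OF a1] by (simp del: cf_q.simps)
    then show ?thesis
      using cf_ratio_step[of a, OF a1, of "k + 2 * i"] by (simp add: y_def power_add field_simps)
  qed
  have "strict_mono (\<lambda>i. k + 2 * i)"
    by (simp add: strict_mono_def)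
  then have "y \<longlonglongrightarrow> (-1) ^ k * \<alpha>"
    unfolding y_def by (intro tendsto_mult tendsto_const LIMSEQ_subseq_LIMSEQ[OF lim, unfolded o_def])
  then have "y 1 \<le> (-1) ^ k * \<alpha>"
    using incseq_SucI[of y] step by (simp add: incseq_le less_imp_le)
  then have "(-1) ^ k * (real (cf_p a k) / cf_q a k) < (-1) ^ k * \<alpha>"
    using step[of 0] by (simp add: y_def)
  then show ?thesis
    using cf_q_pos[of a, OF a1, of k] by (simp add: cf_err_def field_simps)
qed

lemma cf_err_det_q:
  "real (cf_q a (Suc k)) * cf_err \<alpha> a k - real (cf_q a k) * cf_err \<alpha> a (Suc k) = (-1) ^ k"
  using cf_det[of a k] by (simp add: cf_err_def algebra_simps)

lemma cf_err_det_p: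
  "real (cf_p a (Suc k)) * cf_err \<alpha> a k - real (cf_p a k) * cf_err \<alpha> a (Suc k) = (-1) ^ k * \<alpha>"
  using cf_det[of a k] by (simp add: cf_err_def algebra_simps flip: distrib_left)

lemma cf_err_even_bound:
  assumes "cf_expansion \<alpha> a" and "1 \<le> k" and "even k"
  shows "real (cf_p a (Suc k)) * cf_err \<alpha> a k < \<alpha>"
proof -
  have "cf_err \<alpha> a (Suc k) < 0"
    using cf_err_alternates[OF assms(1), of "Suc k"] \<open>even k\<close> by simp
  moreover have "0 < cf_p a k"
    using assms(1,2) by (simp add: cf_expansion_def cf_p_pos)
  ultimately have "real (cf_p a k) * cf_err \<alpha> a (Suc k) < 0"
    by (simp add: mult_pos_neg)
  then show ?thesis
    using cf_err_det_p[of a k \<alpha>] \<open>even k\<close> by simp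
qed

lemma cf_err_odd_bound:
  assumes "cf_expansion \<alpha> a" and "odd k"
  shows "real (cf_q a (Suc k) - cf_p a (Suc k)) * - cf_err \<alpha> a k < 1 - \<alpha>"
proof -
  have "0 < cf_err \<alpha> a (Suc k)"
    using cf_err_alternates[OF assms(1), of "Suc k"] \<open>odd k\<close> by simp
  moreover have "cf_p a k < cf_q a k" "cf_p a (Suc k) < cf_q a (Suc k)"
    using assms(1) by (simp_all add: cf_expansion_def cf_p_less_cf_q)
  ultimately have "0 < (real (cf_q a k) - cf_p a k) * cf_err \<alpha> a (Suc k)"
    by simp
  then show ?thesis
    using cf_err_det_q[of a k \<alpha>] cf_err_det_p[of a k \<alpha>] \<open>odd k\<close> \<open>cf_p a (Suc k) < cf_q a (Suc k)\<close>
    by (simp add: algebra_simps)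
qed

lemma cf_err_even_less:
  assumes "cf_expansion \<alpha> a" and "1 \<le> k" and "even k"
  shows "cf_err \<alpha> a k < \<alpha>"
proof -
  have "0 < cf_err \<alpha> a k"
    using cf_err_alternates[OF assms(1), of k] \<open>even k\<close> by simp
  moreover have "0 < cf_p a (Suc k)"
    using assms(1) by (simp add: cf_expansion_def cf_p_pos)
  ultimately have "cf_err \<alpha> a k \<le> real (cf_p a (Suc k)) * cf_err \<alpha> a k"
    by simp
  with cf_err_even_bound[OF assms] show ?thesis
    by linarith
qed

lemma cf_err_odd_less:
  assumes "cf_expansion \<alpha> a" and "odd k"
  shows "- cf_err \<alpha> a k < 1 - \<alpha>"
proof -
  have "cf_err \<alpha> a k < 0"
    using cf_err_alternates[OF assms(1), of k] \<open>odd k\<close> by simp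
  moreover have "cf_p a (Suc k) < cf_q a (Suc k)"
    using assms(1) by (simp add: cf_expansion_def cf_p_less_cf_q)
  ultimately have "- cf_err \<alpha> a k \<le> real (cf_q a (Suc k) - cf_p a (Suc k)) * - cf_err \<alpha> a k"
    by simp
  with cf_err_odd_bound[OF assms] show ?thesis
    by linarith
qed

lemma letter_add_int: "letter conv \<alpha> (x + of_int N) = letter conv \<alpha> x"
  by (simp add: letter_def)

lemma letter_eq_0: "0 < x \<Longrightarrow> x < 1 - \<alpha> \<Longrightarrow> 0 < \<alpha> \<Longrightarrow> letter conv \<alpha> x = 0"
  by (simp add: letter_def frac_eq)

lemma letter_eq_1: "1 - \<alpha> < x \<Longrightarrow> x < 1 \<Longrightarrow> \<alpha> < 1 \<Longrightarrow> letter conv \<alpha> x = 1"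
  by (simp add: letter_def frac_eq)

text \<open>This is \<lambda> + 1 in the notation of the statement.\<close>
definition singular_span :: "(nat \<Rightarrow> nat) \<Rightarrow> nat \<Rightarrow> nat" where
  "singular_span a k = (if odd k then cf_q a (Suc k) - cf_p a (Suc k) else cf_p a (Suc k))"

lemma singular_span_pos:
  assumes "cf_expansion \<alpha> a"
  shows "0 < singular_span a k"
  using assms cf_p_pos[of a "Suc k"] cf_p_less_cf_q[of a "Suc k"]
  by (simp add: cf_expansion_def singular_span_def)

text \<open>The condition 0 < r keeps the points off 0 and -\<alpha>, where the two conventions differ.\<close>
lemma letter_singular_multiple:
  assumes "cf_expansion \<alpha> a" and "1 \<le> k" and "0 < r" and "r \<le> real (singular_span a k)"
  shows "letter conv \<alpha> (- (r * cf_err \<alpha> a k)) = (if even k then 1 else 0)"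
    and "letter conv \<alpha> (r * cf_err \<alpha> a k - \<alpha>) = (if even k then 1 else 0)"
proof -
  have \<alpha>: "0 < \<alpha>" "\<alpha> < 1"
    using assms(1) by (simp_all add: cf_expansion_def)
  have shift: "letter conv \<alpha> (x + 1) = letter conv \<alpha> x" for x
    using letter_add_int[of conv \<alpha> x 1] by simp
  let ?\<theta> = "cf_err \<alpha> a k"
  have "letter conv \<alpha> (- (r * ?\<theta>)) = (if even k then 1 else 0) \<and>
        letter conv \<alpha> (r * ?\<theta> - \<alpha>) = (if even k then 1 else 0)"
  proof (cases "even k")
    case True
    have "0 < ?\<theta>"
      using cf_err_alternates[OF assms(1), of k] True by simp
    have "r * ?\<theta> \<le> real (cf_p a (Suc k)) * ?\<theta>"
      using assms(4) True \<open>0 < ?\<theta>\<close> by (simp add: singular_span_def)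
    then have "r * ?\<theta> < \<alpha>"
      using cf_err_even_bound[OF assms(1,2) True] by linarith
    moreover have "0 < r * ?\<theta>"
      using assms(3) \<open>0 < ?\<theta>\<close> by simp
    ultimately show ?thesis
      using True \<alpha> shift[of "- (r * ?\<theta>)"] shift[of "r * ?\<theta> - \<alpha>"]
      by (simp add: letter_eq_1)
  next
    case False
    have "?\<theta> < 0"
      using cf_err_alternates[OF assms(1), of k] False by simp
    have "r * - ?\<theta> \<le> real (cf_q a (Suc k) - cf_p a (Suc k)) * - ?\<theta>"
      using assms(4) False \<open>?\<theta> < 0\<close> by (simp add: singular_span_def)
    then have "r * - ?\<theta> < 1 - \<alpha>"
      using cf_err_odd_bound[OF assms(1) False] by linarith
    moreover have "0 < r * - ?\<theta>"
      using assms(3) \<open>?\<theta> < 0\<close> by (simp add: mult_pos_neg)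
    ultimately show ?thesis
      using False \<alpha> shift[of "r * ?\<theta> - \<alpha>"] by (simp add: letter_eq_0)
  qed
  then show "letter conv \<alpha> (- (r * ?\<theta>)) = (if even k then 1 else 0)"
    and "letter conv \<alpha> (r * ?\<theta> - \<alpha>) = (if even k then 1 else 0)"
    by simp_all
qed

definition orbit_reads :: "bool \<Rightarrow> real \<Rightarrow> real \<Rightarrow> nat list \<Rightarrow> bool" where
  "orbit_reads conv \<alpha> x v \<longleftrightarrow> (\<forall>i<length v. letter conv \<alpha> (x + real i * \<alpha>) = v ! i)"

lemma orbit_reads_add_int: "orbit_reads conv \<alpha> (x + of_int N) v \<longleftrightarrow> orbit_reads conv \<alpha> x v"
proof -
  have "x + of_int N + real i * \<alpha> = (x + real i * \<alpha>) + of_int N" for i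
    by simp
  then show ?thesis
    unfolding orbit_reads_def by (simp only: letter_add_int)
qed

lemma orbit_reads_take: "orbit_reads conv \<alpha> x w \<Longrightarrow> orbit_reads conv \<alpha> x (take n w)"
  by (simp add: orbit_reads_def)

lemma orbit_reads_drop:
  assumes "orbit_reads conv \<alpha> x w"
  shows "orbit_reads conv \<alpha> (x + real n * \<alpha>) (drop n w)"
  unfolding orbit_reads_def
proof (intro allI impI)
  fix i
  assume "i < length (drop n w)"
  then have "n + i < length w"
    by simp
  then have "letter conv \<alpha> (x + real (n + i) * \<alpha>) = w ! (n + i)"
    using assms unfolding orbit_reads_def by blast
  then show "letter conv \<alpha> (x + real n * \<alpha> + real i * \<alpha>) = drop n w ! i"
    using \<open>i < length (drop n w)\<close> by (simp add: algebra_simps)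
qed

lemma lang_orbit_reads:
  assumes "w \<in> lang conv \<alpha>"
  obtains x where "orbit_reads conv \<alpha> x w"
proof -
  obtain \<rho> m where w: "w = map (\<lambda>i. rot_word conv \<alpha> \<rho> (m + i)) [0..<length w]"
    using assms by (auto simp: lang_def)
  have "w ! i = letter conv \<alpha> (\<rho> + real m * \<alpha> + real i * \<alpha>)" if "i < length w" for i
  proof -
    have "w ! i = map (\<lambda>i. rot_word conv \<alpha> \<rho> (m + i)) [0..<length w] ! i"
      using w by (rule arg_cong)
    also have "\<dots> = letter conv \<alpha> (\<rho> + real m * \<alpha> + real i * \<alpha>)"
      using that by (simp add: rot_word_def algebra_simps)
    finally show ?thesis .
  qed
  then have "orbit_reads conv \<alpha> (\<rho> + real m * \<alpha>) w"
    by (simp add: orbit_reads_def)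
  then show ?thesis ..
qed

lemma cyl_eq: "cyl conv \<alpha> v = {x. 0 \<le> x \<and> x < 1 \<and> orbit_reads conv \<alpha> x v}"
  by (simp add: cyl_def orbit_reads_def rot_word_def)

lemma orbit_reads_iff_frac_in_cyl: "orbit_reads conv \<alpha> x v \<longleftrightarrow> frac x \<in> cyl conv \<alpha> v"
  using orbit_reads_add_int[of conv \<alpha> x "- \<lfloor>x\<rfloor>" v] frac_lt_1[of x]
  by (simp add: cyl_eq frac_def)

lemma cyl_same_letter:
  "x \<in> cyl conv \<alpha> v \<Longrightarrow> y \<in> cyl conv \<alpha> v \<Longrightarrow> v \<noteq> [] \<Longrightarrow> letter conv \<alpha> x = letter conv \<alpha> y"
proof -
  assume "x \<in> cyl conv \<alpha> v" "y \<in> cyl conv \<alpha> v" "v \<noteq> []"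
  then have "letter conv \<alpha> (x + real 0 * \<alpha>) = v ! 0" "letter conv \<alpha> (y + real 0 * \<alpha>) = v ! 0"
    unfolding cyl_eq orbit_reads_def by blast+
  then show ?thesis
    by simp
qed

lemma singular_factor_length:
  assumes "cf_expansion \<alpha> a" and "singular_factor conv \<alpha> a k s"
  shows "length s = cf_q a k" and "s \<noteq> []"
  using assms cf_q_pos[of a k] by (auto simp: cf_expansion_def singular_factor_def)

lemma singular_factor_arc:
  assumes "singular_factor conv \<alpha> a k s"
  shows "arc_endpoints (cyl conv \<alpha> s) 0 (frac (- cf_err \<alpha> a k))"
proof -
  have "- real (cf_q a k) * \<alpha> = - cf_err \<alpha> a k + of_int (- int (cf_p a k))"
    by (simp add: cf_err_def)
  then have "frac (- real (cf_q a k) * \<alpha>) = frac (- cf_err \<alpha> a k)"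
    by (simp only: frac_add_of_int_right)
  with assms show ?thesis
    by (simp add: singular_factor_def)
qed

lemma singular_cyl_even:
  assumes "cf_expansion \<alpha> a" and "1 \<le> k" and "even k" and "singular_factor conv \<alpha> a k s"
  shows "{1 - cf_err \<alpha> a k<..<1} \<subseteq> cyl conv \<alpha> s" and "cyl conv \<alpha> s \<subseteq> insert 0 {1 - cf_err \<alpha> a k..<1}"
proof -
  let ?\<theta> = "cf_err \<alpha> a k" and ?C = "cyl conv \<alpha> s"
  have \<alpha>: "0 < \<alpha>" "\<alpha> < 1"
    using assms(1) by (simp_all add: cf_expansion_def)
  have \<theta>: "0 < ?\<theta>" "?\<theta> < \<alpha>"
    using cf_err_alternates[OF assms(1), of k] cf_err_even_less[OF assms(1-3)] \<open>even k\<close> by simp_all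
  then have "frac (- ?\<theta>) = 1 - ?\<theta>"
    using \<alpha> by (simp add: frac_unique_iff)
  then have arc: "arc_endpoints ?C 0 (1 - ?\<theta>)"
    using singular_factor_arc[OF assms(4)] by simp
  have "s \<noteq> []"
    using singular_factor_length[OF assms(1,4)] by simp
  \<comment> \<open>the long arc contains points of both letters\<close>
  have "\<not> {0<..<1 - ?\<theta>} \<subseteq> ?C"
  proof
    assume "{0<..<1 - ?\<theta>} \<subseteq> ?C"
    then have "(1 - \<alpha>) / 2 \<in> ?C" "1 - (\<alpha> + ?\<theta>) / 2 \<in> ?C"
      using \<theta> \<alpha> by auto
    moreover have "letter conv \<alpha> ((1 - \<alpha>) / 2) = 0"
      using \<alpha> by (intro letter_eq_0) auto
    moreover have "letter conv \<alpha> (1 - (\<alpha> + ?\<theta>) / 2) = 1"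
      using \<theta> \<alpha> by (intro letter_eq_1) auto
    ultimately show False
      using cyl_same_letter[OF _ _ \<open>s \<noteq> []\<close>] by (metis zero_neq_one)
  qed
  moreover have "min 0 (1 - ?\<theta>) = 0" "max 0 (1 - ?\<theta>) = 1 - ?\<theta>"
    using \<theta> \<alpha> by simp_all
  ultimately have "{0..<1} - {0..1 - ?\<theta>} \<subseteq> ?C" "?C \<subseteq> {0..<1} - {0<..<1 - ?\<theta>}"
    using arc by (simp_all add: arc_endpoints_def Let_def)
  moreover have "{0..<1} - {0..1 - ?\<theta>} = {1 - ?\<theta><..<1}" "{0..<1} - {0<..<1 - ?\<theta>} = insert 0 {1 - ?\<theta>..<1}"
    using \<theta> \<alpha> by auto
  ultimately show "{1 - ?\<theta><..<1} \<subseteq> ?C" and "?C \<subseteq> insert 0 {1 - ?\<theta>..<1}"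
    by simp_all
qed

lemma singular_cyl_odd:
  assumes "cf_expansion \<alpha> a" and "odd k" and "singular_factor conv \<alpha> a k s"
  shows "{0<..<- cf_err \<alpha> a k} \<subseteq> cyl conv \<alpha> s" and "cyl conv \<alpha> s \<subseteq> {0..- cf_err \<alpha> a k}"
proof -
  let ?\<theta> = "cf_err \<alpha> a k" and ?C = "cyl conv \<alpha> s"
  have \<alpha>: "0 < \<alpha>" "\<alpha> < 1"
    using assms(1) by (simp_all add: cf_expansion_def)
  have \<theta>: "0 < - ?\<theta>" "- ?\<theta> < 1 - \<alpha>"
    using cf_err_alternates[OF assms(1), of k] cf_err_odd_less[OF assms(1,2)] \<open>odd k\<close> by simp_all
  then have arc: "arc_endpoints ?C 0 (- ?\<theta>)"
    using singular_factor_arc[OF assms(3)] \<alpha> by (simp add: frac_eq)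
  have "s \<noteq> []"
    using singular_factor_length[OF assms(1,3)] by simp
  have "\<not> {0..<1} - {0..- ?\<theta>} \<subseteq> ?C"
  proof
    assume "{0..<1} - {0..- ?\<theta>} \<subseteq> ?C"
    then have "(- ?\<theta> + 1 - \<alpha>) / 2 \<in> ?C" "1 - \<alpha> / 2 \<in> ?C"
      using \<theta> \<alpha> by auto
    moreover have "letter conv \<alpha> ((- ?\<theta> + 1 - \<alpha>) / 2) = 0"
      using \<theta> \<alpha> by (intro letter_eq_0) auto
    moreover have "letter conv \<alpha> (1 - \<alpha> / 2) = 1"
      using \<alpha> by (intro letter_eq_1) auto
    ultimately show False
      using cyl_same_letter[OF _ _ \<open>s \<noteq> []\<close>] by (metis zero_neq_one)
  qed
  moreover have "min 0 (- ?\<theta>) = 0" "max 0 (- ?\<theta>) = - ?\<theta>"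
    using \<theta> by simp_all
  ultimately show "{0<..<- ?\<theta>} \<subseteq> ?C" and "?C \<subseteq> {0..- ?\<theta>}"
    using arc by (simp_all add: arc_endpoints_def Let_def)
qed

lemma singular_orbit_short_arc:
  assumes "cf_expansion \<alpha> a" and "1 \<le> k" and "singular_factor conv \<alpha> a k s"
    and "orbit_reads conv \<alpha> x s"
  obtains t N where "0 \<le> t" "t \<le> 1" "x = of_int N - t * cf_err \<alpha> a k"
proof -
  let ?\<theta> = "cf_err \<alpha> a k"
  have y: "frac x \<in> cyl conv \<alpha> s"
    using assms(4) by (simp add: orbit_reads_iff_frac_in_cyl)
  have x: "x = frac x + of_int \<lfloor>x\<rfloor>"
    by (simp add: frac_def)
  show ?thesis
  proof (cases "even k")
    case True
    have "0 < ?\<theta>"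
      using cf_err_alternates[OF assms(1), of k] True by simp
    have "frac x = 0 \<or> 1 - ?\<theta> \<le> frac x"
      using singular_cyl_even(2)[OF assms(1,2) True assms(3)] y by auto
    then show ?thesis
    proof
      assume "frac x = 0"
      then show ?thesis
        using that[of 0 "\<lfloor>x\<rfloor>"] x by simp
    next
      assume "1 - ?\<theta> \<le> frac x"
      moreover have "x = of_int (\<lfloor>x\<rfloor> + 1) - (1 - frac x) / ?\<theta> * ?\<theta>"
        using x \<open>0 < ?\<theta>\<close> by simp
      ultimately show ?thesis
        using that[of "(1 - frac x) / ?\<theta>" "\<lfloor>x\<rfloor> + 1"] \<open>0 < ?\<theta>\<close> frac_lt_1[of x]
        by (simp add: field_simps)
    qed
  next
    case False
    have "?\<theta> < 0"
      using cf_err_alternates[OF assms(1), of k] False by simp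
    have "frac x \<le> - ?\<theta>"
      using singular_cyl_odd(2)[OF assms(1) False assms(3)] y by auto
    moreover have "x = of_int \<lfloor>x\<rfloor> - frac x / (- ?\<theta>) * ?\<theta>"
      using x \<open>?\<theta> < 0\<close> by simp
    ultimately show ?thesis
      using that[of "frac x / (- ?\<theta>)" "\<lfloor>x\<rfloor>"] \<open>?\<theta> < 0\<close>
      by (simp add: field_simps)
  qed
qed

lemma singular_orbit_midpoint:
  assumes "cf_expansion \<alpha> a" and "1 \<le> k" and "singular_factor conv \<alpha> a k s"
  shows "orbit_reads conv \<alpha> (- cf_err \<alpha> a k / 2) s"
proof (cases "even k")
  case True
  have "0 < cf_err \<alpha> a k" "cf_err \<alpha> a k < 1"
    using cf_err_alternates[OF assms(1), of k] cf_err_even_less[OF assms(1,2) True] True assms(1)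
    by (simp_all add: cf_expansion_def)
  then have "- cf_err \<alpha> a k / 2 + 1 \<in> cyl conv \<alpha> s"
    using singular_cyl_even(1)[OF assms(1,2) True assms(3)] by auto
  then show ?thesis
    using orbit_reads_add_int[of conv \<alpha> "- cf_err \<alpha> a k / 2" 1 s] by (simp add: cyl_eq)
next
  case False
  have "cf_err \<alpha> a k < 0"
    using cf_err_alternates[OF assms(1), of k] False by simp
  then have "- cf_err \<alpha> a k / 2 \<in> cyl conv \<alpha> s"
    using singular_cyl_odd(1)[OF assms(1) False assms(3)] by auto
  then show ?thesis
    by (simp add: cyl_eq)
qed

lemma singular_factor_hd_last:
  assumes "cf_expansion \<alpha> a" and "1 \<le> k" and "singular_factor conv \<alpha> a k s"
  shows "hd s = (if even k then 1 else 0)" and "last s = (if even k then 1 else 0)"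
proof -
  let ?\<theta> = "cf_err \<alpha> a k" and ?q = "cf_q a k"
  have len: "length s = ?q" and "s \<noteq> []"
    using singular_factor_length[OF assms(1,3)] .
  then have "0 < ?q"
    by (metis length_greater_0_conv)
  have half: "0 < (1 / 2 :: real)" "1 / 2 \<le> real (singular_span a k)"
    using singular_span_pos[OF assms(1), of k] by simp_all
  have reads: "s ! i = letter conv \<alpha> (- ?\<theta> / 2 + real i * \<alpha>)" if "i < ?q" for i
    using singular_orbit_midpoint[OF assms] that len by (simp add: orbit_reads_def)
  have "hd s = letter conv \<alpha> (- (1 / 2 * ?\<theta>))"
    using reads[of 0] \<open>0 < ?q\<close> \<open>s \<noteq> []\<close> by (simp add: hd_conv_nth)
  also have "\<dots> = (if even k then 1 else 0)"
    by (rule letter_singular_multiple(1)[OF assms(1,2) half])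
  finally show "hd s = (if even k then 1 else 0)" .
  have shift: "- ?\<theta> / 2 + real (?q - 1) * \<alpha> = (1 / 2 * ?\<theta> - \<alpha>) + of_int (int (cf_p a k))"
    using \<open>0 < ?q\<close> by (simp add: cf_err_def field_simps)
  have "last s = letter conv \<alpha> (- ?\<theta> / 2 + real (?q - 1) * \<alpha>)"
    using reads[of "?q - 1"] \<open>0 < ?q\<close> \<open>s \<noteq> []\<close> len by (simp add: last_conv_nth)
  also have "\<dots> = letter conv \<alpha> (1 / 2 * ?\<theta> - \<alpha>)"
    unfolding shift by (rule letter_add_int)
  also have "\<dots> = (if even k then 1 else 0)"
    by (rule letter_singular_multiple(2)[OF assms(1,2) half])
  finally show "last s = (if even k then 1 else 0)" .
qed

lemma singular_factor_hd_eq_last: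
  assumes "cf_expansion \<alpha> a" and "singular_factor conv \<alpha> a k s"
  shows "hd s = last s"
proof (cases "k = 0")
  case True
  then obtain x where "s = [x]"
    using assms(2) by (auto simp: singular_factor_def length_Suc_conv)
  then show ?thesis
    by simp
next
  case False
  then show ?thesis
    using singular_factor_hd_last[OF assms(1) _ assms(2)] by simp
qed

lemma singular_orbit_forward:
  assumes "cf_expansion \<alpha> a" and "1 \<le> k" and "singular_factor conv \<alpha> a k s"
    and "orbit_reads conv \<alpha> x s" and "2 \<le> m" and "m \<le> singular_span a k"
  shows "letter conv \<alpha> (x + real (m * cf_q a k - 1) * \<alpha>) = (if even k then 1 else 0)"
proof -
  let ?\<theta> = "cf_err \<alpha> a k"
  obtain t N where t: "0 \<le> t" "t \<le> 1" and x: "x = of_int N - t * ?\<theta>"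
    using singular_orbit_short_arc[OF assms(1-4)] .
  have "0 < cf_q a k"
    using assms(1) cf_q_pos[of a k] by (simp add: cf_expansion_def)
  then have "x + real (m * cf_q a k - 1) * \<alpha> = ((real m - t) * ?\<theta> - \<alpha>) + of_int (N + int (m * cf_p a k))"
    using assms(5) x by (simp add: cf_err_def algebra_simps)
  then have "letter conv \<alpha> (x + real (m * cf_q a k - 1) * \<alpha>) = letter conv \<alpha> ((real m - t) * ?\<theta> - \<alpha>)"
    by (simp only: letter_add_int)
  also have "\<dots> = (if even k then 1 else 0)"
    by (rule letter_singular_multiple(2)[OF assms(1,2)]) (use t assms(5,6) in linarith)+
  finally show ?thesis .
qed

lemma singular_orbit_backward:
  assumes "cf_expansion \<alpha> a" and "1 \<le> k" and "singular_factor conv \<alpha> a k s"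
    and "orbit_reads conv \<alpha> x s" and "1 \<le> m" and "m < singular_span a k"
  shows "letter conv \<alpha> (x - real (m * cf_q a k) * \<alpha>) = (if even k then 1 else 0)"
proof -
  let ?\<theta> = "cf_err \<alpha> a k"
  obtain t N where t: "0 \<le> t" "t \<le> 1" and x: "x = of_int N - t * ?\<theta>"
    using singular_orbit_short_arc[OF assms(1-4)] .
  have "x - real (m * cf_q a k) * \<alpha> = - ((real m + t) * ?\<theta>) + of_int (N - int (m * cf_p a k))"
    using x by (simp add: cf_err_def algebra_simps)
  then have "letter conv \<alpha> (x - real (m * cf_q a k) * \<alpha>) = letter conv \<alpha> (- ((real m + t) * ?\<theta>))"
    by (simp only: letter_add_int)
  also have "\<dots> = (if even k then 1 else 0)"
    by (rule letter_singular_multiple(1)[OF assms(1,2)]) (use t assms(5,6) in linarith)+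
  finally show ?thesis .
qed

lemma complete_first_return_length:
  assumes "complete_first_return v u" and "0 < (length u - 2 * length v) div length v"
  shows "length u = ((length u - 2 * length v) div length v + 2) * length v"
proof -
  obtain m where m: "length u = m * length v"
    using assms(1) by (metis complete_first_return_def dvdE mult.commute)
  with assms(2) have "0 < length v" and div: "(m * length v - 2 * length v) div length v = m - 2"
    by (auto simp flip: diff_mult_distrib)
  with assms(2) m have "2 \<le> m"
    by simp
  then show ?thesis
    by (simp only: m div le_add_diff_inverse2)
qed

lemma singular_return_blocks:
  assumes "cf_expansion \<alpha> a" and "singular_factor conv \<alpha> a k s"
    and "w \<in> lang conv \<alpha>" and "complete_first_return s w"
    and "j < (length w - 2 * cf_q a k) div cf_q a k"
  shows "j + 2 \<le> singular_span a k \<Longrightarrow> last (take (cf_q a k) (drop (cf_q a k + j * cf_q a k) w)) = last s"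
    and "(length w - 2 * cf_q a k) div cf_q a k - j < singular_span a k \<Longrightarrow>
         hd (take (cf_q a k) (drop (cf_q a k + j * cf_q a k) w)) = hd s"
proof -
  let ?q = "cf_q a k" and ?L = "if even k then 1 else 0 :: nat"
  define n where "n = (length w - 2 * ?q) div ?q"
  have len: "length s = ?q" and "s \<noteq> []"
    using singular_factor_length[OF assms(1,2)] .
  then have "0 < ?q"
    by (metis length_greater_0_conv)
  have "j < n"
    using assms(5) by (simp add: n_def)
  then have w_len: "length w = (n + 2) * ?q"
    using complete_first_return_length[OF assms(4)] len by (simp add: n_def)
  have k: "1 \<le> k" if "2 \<le> singular_span a k"
    using that by (cases k) (simp_all add: singular_span_def)
  have block: "?q + j * ?q + ?q \<le> length w"
    using w_len \<open>j < n\<close> mult_le_mono1[of "j + 2" "n + 2" ?q] by simp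
  obtain x where x: "orbit_reads conv \<alpha> x w"
    using lang_orbit_reads[OF assms(3)] .
  then have w_nth: "w ! i = letter conv \<alpha> (x + real i * \<alpha>)" if "i < length w" for i
    using that by (simp add: orbit_reads_def)
  have "take ?q w = s"
    using assms(4) len by (auto simp: complete_first_return_def prefix_def)
  then have start: "orbit_reads conv \<alpha> x s"
    using orbit_reads_take[OF x, of ?q] by simp
  have "drop ((n + 1) * ?q) w = s"
    using assms(4) w_len len by (auto simp: complete_first_return_def suffix_def)
  then have stop: "orbit_reads conv \<alpha> (x + real ((n + 1) * ?q) * \<alpha>) s"
    using orbit_reads_drop[OF x, of "(n + 1) * ?q"] by simp
  show "last (take ?q (drop (?q + j * ?q) w)) = last s" if "j + 2 \<le> singular_span a k"
  proof -
    have "last (take ?q (drop (?q + j * ?q) w)) = w ! ((j + 2) * ?q - 1)"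
      using block \<open>0 < ?q\<close> by (simp add: last_conv_nth algebra_simps)
    also have "\<dots> = letter conv \<alpha> (x + real ((j + 2) * ?q - 1) * \<alpha>)"
      using block \<open>0 < ?q\<close> by (intro w_nth) (simp add: algebra_simps)
    also have "\<dots> = ?L"
      using singular_orbit_forward[OF assms(1) k assms(2) start _ that] that by simp
    finally show ?thesis
      using singular_factor_hd_last[OF assms(1) k assms(2)] that by simp
  qed
  show "hd (take ?q (drop (?q + j * ?q) w)) = hd s" if "n - j < singular_span a k"
  proof -
    have "hd (take ?q (drop (?q + j * ?q) w)) = w ! (?q + j * ?q)"
      using block \<open>0 < ?q\<close> by (simp add: hd_drop_conv_nth)
    also have "\<dots> = letter conv \<alpha> (x + real (?q + j * ?q) * \<alpha>)"
      using block \<open>0 < ?q\<close> by (intro w_nth) simp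
    also have "x + real (?q + j * ?q) * \<alpha> = x + real ((n + 1) * ?q) * \<alpha> - real ((n - j) * ?q) * \<alpha>"
      using \<open>j < n\<close> by (simp add: algebra_simps)
    also have "letter conv \<alpha> \<dots> = ?L"
      using singular_orbit_backward[OF assms(1) k assms(2) stop _ that] \<open>j < n\<close> that by simp
    finally show ?thesis
      using singular_factor_hd_last[OF assms(1) k assms(2)] \<open>j < n\<close> that by simp
  qed
qed

theorem lemma4p5:
  fixes conv :: bool and \<alpha> :: real and a :: "nat \<Rightarrow> nat" and k :: nat
    and s w :: "nat list"
  assumes "cf_expansion \<alpha> a"
    and "singular_factor conv \<alpha> a k s"
    and "w \<in> lang conv \<alpha>"
    and "complete_first_return s w"
  shows "let q = cf_q a k;
             n = (length w - 2 * q) div q;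
             u = (\<lambda>j. take q (drop (q + j * q) w));
             lam = (if odd k then cf_q a (k+1) - cf_p a (k+1) - 1 else cf_p a (k+1) - 1)
         in (\<forall>j. j < lam \<and> j < n \<longrightarrow> last (u j) = last s) \<and>
            (\<forall>j. n - lam \<le> j \<and> j < n \<longrightarrow> hd (u j) = hd s) \<and>
            hd s = last s"
proof -
  let ?n = "(length w - 2 * cf_q a k) div cf_q a k"
  have lam: "(if odd k then cf_q a (k+1) - cf_p a (k+1) - 1 else cf_p a (k+1) - 1) = singular_span a k - 1"
    by (simp add: singular_span_def)
  have "j + 2 \<le> singular_span a k" if "j < singular_span a k - 1" for j
    using that by linarith
  moreover have "?n - j < singular_span a k" if "?n - (singular_span a k - 1) \<le> j" and "j < ?n" for j
    using that by linarith
  ultimately show ?thesis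
    unfolding Let_def lam
    using singular_return_blocks[OF assms] singular_factor_hd_eq_last[OF assms(1,2)] by blast
qed

end
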